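(* Let $k(\bm{x},\bm{x}')=\kappa(\|\bm{x}-\bm{x}'\|)$ be a symmetric positive semidefinite isotropic kernel on $\mathbb{R}^d$ with $\kappa:[0,\infty)\to\mathbb{R}$ non-increasing. Let $\sigma_n^2>0$, let $\mathbb{D}_N^x=\{\bm{x}^{(i)}\}_{i=1}^N$ be an input training data set with GP posterior variance $\sigma_N^2(\cdot)$, and for $\rho>0$ let $\mathbb{B}_\rho(\bm{x})=\{\bm{x}'\in\mathbb{D}_N^x:\|\bm{x}'-\bm{x}\|\le\rho\}$. Then for every $\bm{x}$ and every $\rho>0$ with $|\mathbb{B}_\rho(\bm{x})|\ge1$ and $\kappa(\rho)\ge0$, $$\sigma_N^2(\bm{x})\le\kappa(0)-\frac{\kappa(\rho)^2}{\kappa(0)+\frac{\sigma_n^2}{|\mathbb{B}_\rho(\bm{x})|}}.$$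
   Context: Gaussian process posterior variance: given a kernel $k$, noise variance $\sigma_n^2>0$ and training inputs $\bm{x}^{(1)},\dots,\bm{x}^{(N)}$, define $K_{N,ij}=k(\bm{x}^{(i)},\bm{x}^{(j)})$, $k_{N,i}(\bm{x})=k(\bm{x},\bm{x}^{(i)})$, $\bm{A}_N=\bm{K}_N+\sigma_n^2\bm{I}_N$, and $\sigma_N^2(\bm{x})=k(\bm{x},\bm{x})-\bm{k}_N(\bm{x})^T\bm{A}_N^{-1}\bm{k}_N(\bm{x})$. $|\cdot|$ denotes cardinality (training points counted with multiplicity). *)

theory Defs
  imports "HOL-Analysis.Analysis"
begin

definition psd_kernel :: "('a \<Rightarrow> 'a \<Rightarrow> real) \<Rightarrow> bool" where
  "psd_kernel k \<longleftrightarrow>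
     (\<forall>(n::nat) (xs :: nat \<Rightarrow> 'a) (c :: nat \<Rightarrow> real).
        0 \<le> (\<Sum>i<n. \<Sum>j<n. c i * c j * k (xs i) (xs j)))"

definition symmetric_kernel :: "('a \<Rightarrow> 'a \<Rightarrow> real) \<Rightarrow> bool" where
  "symmetric_kernel k \<longleftrightarrow> (\<forall>x y. k x y = k y x)"

text \<open>Training inputs indexed by a finite type 'n (N = CARD('n)).\<close>
definition gram :: "('a \<Rightarrow> 'a \<Rightarrow> real) \<Rightarrow> ('n::finite \<Rightarrow> 'a) \<Rightarrow> real^'n^'n" where
  "gram k X = (\<chi> i j. k (X i) (X j))"

definition kvec :: "('a \<Rightarrow> 'a \<Rightarrow> real) \<Rightarrow> ('n::finite \<Rightarrow> 'a) \<Rightarrow> 'a \<Rightarrow> real^'n" where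
  "kvec k X x = (\<chi> i. k x (X i))"

definition post_var :: "('a \<Rightarrow> 'a \<Rightarrow> real) \<Rightarrow> real \<Rightarrow> ('n::finite \<Rightarrow> 'a) \<Rightarrow> 'a \<Rightarrow> real" where
  "post_var k sn2 X x =
     k x x - kvec k X x \<bullet> (matrix_inv (gram k X + sn2 *\<^sub>R mat 1) *v kvec k X x)"

end

theory Submission
  imports Defs
begin

text \<open>
  With \<open>A = K + \<sigma>\<^sub>n\<^sup>2 I\<close> symmetric positive definite, the quadratic form
  \<open>k\<^sub>N(x)\<^sup>T A\<^sup>-\<^sup>1 k\<^sub>N(x)\<close> is the maximum of \<open>2 c\<^sup>T k\<^sub>N(x) - c\<^sup>T A c\<close> over all \<open>c\<close>,
  so every test vector \<open>c\<close> gives an upper bound on the posterior variance. Take \<open>c\<close>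
  constant \<open>\<alpha>\<close> on the \<open>m\<close> training points of the ball and zero elsewhere: monotonicity
  of \<open>\<kappa>\<close> gives \<open>c\<^sup>T k\<^sub>N(x) \<ge> \<alpha> m \<kappa>(\<rho>)\<close> and \<open>c\<^sup>T A c \<le> \<alpha>\<^sup>2 (m\<^sup>2 \<kappa>(0) + m \<sigma>\<^sub>n\<^sup>2)\<close>,
  and optimising over \<open>\<alpha>\<close> yields the bound.
\<close>

lemma inner_matrix_vector_mult_commute:
  fixes A :: "real^'n^'n"
  assumes "transpose A = A"
  shows "a \<bullet> (A *v b) = b \<bullet> (A *v a)"
  by (metis assms dot_lmul_matrix vector_transpose_matrix inner_commute)

lemma matrix_mul_matrix_inv_right:
  fixes A :: "'a::semiring_1^'n^'m"
  assumes "invertible A"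
  shows "A ** matrix_inv A = mat 1"
  using someI_ex[OF assms[unfolded invertible_def]] by (simp add: matrix_inv_def)

lemma invertible_if_coercive:
  fixes A :: "real^'n^'n"
  assumes "s > 0" and coercive: "\<And>v. s * (v \<bullet> v) \<le> v \<bullet> (A *v v)"
  shows "invertible A"
proof -
  have "v = 0" if "A *v v = 0" for v
    using coercive[of v] that \<open>s > 0\<close>
    by (simp add: mult_le_0_iff) (meson inner_eq_zero_iff inner_ge_zero order.antisym)
  then show ?thesis
    by (simp add: invertible_left_inverse matrix_left_invertible_ker)
qed

lemma inner_matrix_inv_ge:
  fixes A :: "real^'n^'n"
  assumes "transpose A = A" and "invertible A" and psd: "\<And>v. 0 \<le> v \<bullet> (A *v v)"
  shows "2 * (c \<bullet> b) - c \<bullet> (A *v c) \<le> b \<bullet> (matrix_inv A *v b)"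
proof -
  define u where "u = matrix_inv A *v b"
  have Au: "A *v u = b"
    by (simp add: u_def matrix_vector_mul_assoc matrix_mul_matrix_inv_right[OF \<open>invertible A\<close>])
  have "0 \<le> (c - u) \<bullet> (A *v (c - u))" by (rule psd)
  also have "\<dots> = c \<bullet> (A *v c) - c \<bullet> (A *v u) - u \<bullet> (A *v c) + u \<bullet> (A *v u)"
    by (simp add: matrix_vector_mult_diff_distrib inner_diff_left inner_diff_right)
  also have "\<dots> = c \<bullet> (A *v c) - 2 * (c \<bullet> b) + b \<bullet> u"
    using inner_matrix_vector_mult_commute[OF \<open>transpose A = A\<close>, of u c] Au
    by (simp add: inner_commute)
  finally show ?thesis by (simp add: u_def)
qed

lemma psd_kernel_sum_nonneg:
  fixes k :: "'a \<Rightarrow> 'a \<Rightarrow> real" and X :: "'n::finite \<Rightarrow> 'a"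
  assumes "psd_kernel k"
  shows "0 \<le> (\<Sum>i\<in>UNIV. \<Sum>j\<in>UNIV. c i * c j * k (X i) (X j))"
proof -
  obtain h :: "nat \<Rightarrow> 'n" where h: "bij_betw h {..<CARD('n)} UNIV"
    using ex_bij_betw_nat_finite[of "UNIV::'n set"] by (auto simp: atLeast0LessThan)
  have reindex: "sum F UNIV = (\<Sum>i<CARD('n). F (h i))" for F :: "'n \<Rightarrow> real"
    by (simp add: sum.reindex_bij_betw[OF h])
  show ?thesis
    unfolding reindex
    using assms[unfolded psd_kernel_def, rule_format, where n = "CARD('n)" and xs = "X \<circ> h" and c = "c \<circ> h"]
    by simp
qed

lemma psd_kernel_diag_nonneg:
  assumes "psd_kernel k"
  shows "0 \<le> k x x"
  using assms[unfolded psd_kernel_def, rule_format, where n = 1 and xs = "\<lambda>_. x" and c = "\<lambda>_. 1"]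
  by simp

lemma gram_quadratic_form:
  fixes X :: "'n::finite \<Rightarrow> 'a"
  shows "v \<bullet> ((gram k X + s *\<^sub>R mat 1) *v v)
           = (\<Sum>i\<in>UNIV. \<Sum>j\<in>UNIV. v$i * v$j * k (X i) (X j)) + s * (v \<bullet> v)"
proof -
  have "(gram k X + s *\<^sub>R mat 1) *v v = gram k X *v v + s *\<^sub>R v"
    by (simp add: matrix_vector_mult_add_rdistrib flip: scaleR_matrix_vector_assoc)
  moreover have "v \<bullet> (gram k X *v v) = (\<Sum>i\<in>UNIV. \<Sum>j\<in>UNIV. v$i * v$j * k (X i) (X j))"
    by (simp add: inner_vec_def matrix_vector_mult_def gram_def sum_distrib_left algebra_simps)
  ultimately show ?thesis
    by (simp add: inner_add_right)
qed

lemma post_var_le_variational: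
  assumes "symmetric_kernel k" and "psd_kernel k" and "sn2 > 0"
  shows "post_var k sn2 X x
           \<le> k x x - (2 * (c \<bullet> kvec k X x) - c \<bullet> ((gram k X + sn2 *\<^sub>R mat 1) *v c))"
proof -
  define A where "A = gram k X + sn2 *\<^sub>R mat 1"
  have coercive: "sn2 * (v \<bullet> v) \<le> v \<bullet> (A *v v)" for v
    unfolding A_def gram_quadratic_form using psd_kernel_sum_nonneg[OF \<open>psd_kernel k\<close>] by simp
  have "transpose A = A"
    using \<open>symmetric_kernel k\<close>
    by (simp add: A_def transpose_def gram_def mat_def vec_eq_iff symmetric_kernel_def)
  moreover have "invertible A"
    using invertible_if_coercive[OF \<open>sn2 > 0\<close> coercive] .
  moreover have "0 \<le> v \<bullet> (A *v v)" for v
    using \<open>sn2 > 0\<close> by (intro order_trans[OF _ coercive]) simp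
  ultimately have "2 * (c \<bullet> kvec k X x) - c \<bullet> (A *v c) \<le> kvec k X x \<bullet> (matrix_inv A *v kvec k X x)"
    by (rule inner_matrix_inv_ge)
  then show ?thesis
    unfolding post_var_def A_def[symmetric] by linarith
qed

lemma post_var_le_isotropic_ball:
  fixes \<kappa> :: "real \<Rightarrow> real" and X :: "'n::finite \<Rightarrow> 'a::real_normed_vector"
    and x :: 'a and \<rho> \<alpha> :: real
  assumes k_def: "\<And>y z. k y z = \<kappa> (norm (y - z))"
    and "symmetric_kernel k" and "psd_kernel k" and mono: "antimono_on {0..} \<kappa>"
    and "sn2 > 0" and "\<alpha> \<ge> 0"
  defines "m \<equiv> real (card {i. norm (X i - x) \<le> \<rho>})"
  shows "post_var k sn2 X x \<le> \<kappa> 0 - (2 * \<alpha> * m * \<kappa> \<rho> - \<alpha>\<^sup>2 * (m\<^sup>2 * \<kappa> 0 + m * sn2))"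
proof -
  define B where "B = {i. norm (X i - x) \<le> \<rho>}"
  define c :: "real^'n" where "c = (\<chi> i. if i \<in> B then \<alpha> else 0)"
  have sum_c: "(\<Sum>i\<in>UNIV. c$i * f i) = \<alpha> * (\<Sum>i\<in>B. f i)" for f
    by (simp add: c_def if_distrib if_distribR sum.If_cases sum_distrib_left)
  have antimono: "\<kappa> b \<le> \<kappa> a" if "0 \<le> a" "a \<le> b" for a b
    using mono that unfolding monotone_on_def by auto
  have "(\<Sum>i\<in>B. \<kappa> \<rho>) \<le> (\<Sum>i\<in>B. \<kappa> (norm (x - X i)))"
    by (intro sum_mono antimono) (auto simp: B_def norm_minus_commute)
  then have cross: "\<alpha> * m * \<kappa> \<rho> \<le> c \<bullet> kvec k X x"
    using mult_left_mono[OF _ \<open>\<alpha> \<ge> 0\<close>] sum_c[of "\<lambda>i. \<kappa> (norm (x - X i))"]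
    by (simp add: m_def B_def inner_vec_def kvec_def k_def mult.assoc)
  have sum_c_const: "(\<Sum>i\<in>UNIV. c$i) = \<alpha> * m"
    using sum_c[of "\<lambda>_. 1"] by (simp add: m_def B_def)
  have "(\<Sum>i\<in>UNIV. \<Sum>j\<in>UNIV. c$i * c$j * k (X i) (X j)) \<le> (\<Sum>i\<in>UNIV. \<Sum>j\<in>UNIV. c$i * c$j * \<kappa> 0)"
    using \<open>\<alpha> \<ge> 0\<close>
    by (intro sum_mono mult_left_mono) (auto simp: c_def k_def intro: antimono)
  also have "\<dots> = (\<alpha> * m)\<^sup>2 * \<kappa> 0"
    by (simp add: sum_c_const power2_eq_square flip: sum_distrib_left sum_distrib_right)
  finally have "c \<bullet> ((gram k X + sn2 *\<^sub>R mat 1) *v c) \<le> (\<alpha> * m)\<^sup>2 * \<kappa> 0 + sn2 * (c \<bullet> c)"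
    by (simp add: gram_quadratic_form)
  moreover have "c \<bullet> c = (\<Sum>i\<in>UNIV. c$i) * \<alpha>"
    by (auto simp: inner_vec_def c_def sum_distrib_right intro!: sum.cong)
  ultimately have quad: "c \<bullet> ((gram k X + sn2 *\<^sub>R mat 1) *v c) \<le> \<alpha>\<^sup>2 * (m\<^sup>2 * \<kappa> 0 + m * sn2)"
    by (simp add: sum_c_const power2_eq_square algebra_simps)
  show ?thesis
    using post_var_le_variational[OF \<open>symmetric_kernel k\<close> \<open>psd_kernel k\<close> \<open>sn2 > 0\<close>, of X x c]
      cross quad
    by (simp add: k_def)
qed

theorem corollary3p1:
  fixes \<kappa> :: "real \<Rightarrow> real"
    and k :: "'a::euclidean_space \<Rightarrow> 'a \<Rightarrow> real"
    and sn2 :: real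
    and X :: "'n::finite \<Rightarrow> 'a"
    and x :: 'a
    and \<rho> :: real
  assumes k_def: "\<And>y z. k y z = \<kappa> (norm (y - z))"
    and sym: "symmetric_kernel k"
    and psd: "psd_kernel k"
    and mono: "antimono_on {0..} \<kappa>"
    and sn2_pos: "sn2 > 0"
    and rho_pos: "\<rho> > 0"
    and ball_ne: "card {i. norm (X i - x) \<le> \<rho>} \<ge> 1"
    and kappa_rho: "\<kappa> \<rho> \<ge> 0"
  shows "post_var k sn2 X x
           \<le> \<kappa> 0 - (\<kappa> \<rho>)\<^sup>2 / (\<kappa> 0 + sn2 / real (card {i. norm (X i - x) \<le> \<rho>}))"
proof -
  define m where "m = real (card {i. norm (X i - x) \<le> \<rho>})"
  define D where "D = m\<^sup>2 * \<kappa> 0 + m * sn2"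
  have "m > 0" using ball_ne by (simp add: m_def)
  moreover have "\<kappa> 0 \<ge> 0" using psd_kernel_diag_nonneg[OF psd, of x] by (simp add: k_def)
  ultimately have "D > 0" using sn2_pos by (simp add: D_def add_nonneg_pos)
  have "post_var k sn2 X x \<le> \<kappa> 0 - (2 * (m * \<kappa> \<rho> / D) * m * \<kappa> \<rho> - (m * \<kappa> \<rho> / D)\<^sup>2 * D)"
    using post_var_le_isotropic_ball[OF k_def sym psd mono sn2_pos,
        where \<alpha> = "m * \<kappa> \<rho> / D" and x = x and \<rho> = \<rho>]
      \<open>m > 0\<close> \<open>D > 0\<close> kappa_rho
    by (simp add: m_def D_def)
  also have "\<dots> = \<kappa> 0 - (m * \<kappa> \<rho>)\<^sup>2 / D"
    using \<open>D > 0\<close> by (simp add: field_simps power2_eq_square)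
  also have "D = m\<^sup>2 * (\<kappa> 0 + sn2 / m)"
    using \<open>m > 0\<close> by (simp add: D_def field_simps power2_eq_square)
  also have "\<kappa> 0 - (m * \<kappa> \<rho>)\<^sup>2 / (m\<^sup>2 * (\<kappa> 0 + sn2 / m)) = \<kappa> 0 - (\<kappa> \<rho>)\<^sup>2 / (\<kappa> 0 + sn2 / m)"
    using \<open>m > 0\<close> by (simp add: power_mult_distrib)
  finally show ?thesis by (simp add: m_def)
qed

end
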